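(* Let $(H,L_H)$ be a right-resolving and follower-separated labeled graph. Then $L_H$ is injective on the set $\mathcal R(L_H)$ of regular rays in $X_H$.
   Context: A labeled graph $(H,L_H)$: finite directed graph (vertices $V_H$, edges $E_H$, source/terminal maps $s_H,t_H$) without sinks or sources, labeling $L_H:E_H\to A$, edge shift $X_H$; $L_H$ acts coordinatewise, giving $L_H:X_H\to Y=L_H(X_H)$. Right-resolving: distinct edges with the same source have distinct labels. $f_H(v)=\{L_H(x): x$ a right-infinite path starting at $v\}$; follower-separated: $f_H(v)=f_H(w)$ implies $v=w$. For $x\in X_H$, $\mathbb U(x)=\{z\in X_H:\exists N\ \forall i\le N,\ z_i=x_i\}$ and similarly in $Y$; $x$ is a regular ray if $L_H$ maps $\mathbb U(x)$ onto $\mathbb U(L_H(x))$; $\mathcal R(L_H)$ is the set of regular rays. *)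

theory Defs
  imports Main
begin

definition labeled_graph ::
  "'v set \<Rightarrow> 'e set \<Rightarrow> ('e \<Rightarrow> 'v) \<Rightarrow> ('e \<Rightarrow> 'v) \<Rightarrow> ('e \<Rightarrow> 'a) \<Rightarrow> bool" where
  "labeled_graph V E s t lab \<longleftrightarrow>
     finite V \<and> finite E \<and> (\<forall>e\<in>E. s e \<in> V \<and> t e \<in> V) \<and>
     (\<forall>v\<in>V. \<exists>e\<in>E. s e = v) \<and> (\<forall>v\<in>V. \<exists>e\<in>E. t e = v)"

definition edge_shift :: "'e set \<Rightarrow> ('e \<Rightarrow> 'v) \<Rightarrow> ('e \<Rightarrow> 'v) \<Rightarrow> (int \<Rightarrow> 'e) set" where
  "edge_shift E s t = {x. \<forall>i. x i \<in> E \<and> t (x i) = s (x (i + 1))}"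

definition lab_map :: "('e \<Rightarrow> 'a) \<Rightarrow> (int \<Rightarrow> 'e) \<Rightarrow> (int \<Rightarrow> 'a)" where
  "lab_map lab x = (\<lambda>i. lab (x i))"

definition right_resolving :: "'e set \<Rightarrow> ('e \<Rightarrow> 'v) \<Rightarrow> ('e \<Rightarrow> 'a) \<Rightarrow> bool" where
  "right_resolving E s lab \<longleftrightarrow>
     (\<forall>e\<in>E. \<forall>e'\<in>E. e \<noteq> e' \<and> s e = s e' \<longrightarrow> lab e \<noteq> lab e')"

definition follower_set ::
  "'e set \<Rightarrow> ('e \<Rightarrow> 'v) \<Rightarrow> ('e \<Rightarrow> 'v) \<Rightarrow> ('e \<Rightarrow> 'a) \<Rightarrow> 'v \<Rightarrow> (nat \<Rightarrow> 'a) set" where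
  "follower_set E s t lab v =
     {(\<lambda>n. lab (p n)) | p. (\<forall>n. p n \<in> E \<and> t (p n) = s (p (Suc n))) \<and> s (p 0) = v}"

definition follower_separated ::
  "'v set \<Rightarrow> 'e set \<Rightarrow> ('e \<Rightarrow> 'v) \<Rightarrow> ('e \<Rightarrow> 'v) \<Rightarrow> ('e \<Rightarrow> 'a) \<Rightarrow> bool" where
  "follower_separated V E s t lab \<longleftrightarrow>
     (\<forall>v\<in>V. \<forall>w\<in>V. follower_set E s t lab v = follower_set E s t lab w \<longrightarrow> v = w)"

definition left_asym :: "(int \<Rightarrow> 'b) set \<Rightarrow> (int \<Rightarrow> 'b) \<Rightarrow> (int \<Rightarrow> 'b) set" where
  "left_asym S x = {z \<in> S. \<exists>N. \<forall>i\<le>N. z i = x i}"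

definition regular_rays ::
  "'e set \<Rightarrow> ('e \<Rightarrow> 'v) \<Rightarrow> ('e \<Rightarrow> 'v) \<Rightarrow> ('e \<Rightarrow> 'a) \<Rightarrow> (int \<Rightarrow> 'e) set" where
  "regular_rays E s t lab =
     {x \<in> edge_shift E s t.
        lab_map lab ` left_asym (edge_shift E s t) x
          = left_asym (lab_map lab ` edge_shift E s t) (lab_map lab x)}"

end

theory Submission
  imports Defs
begin

(* Follower separation and right-resolvingness reduce the claim to showing that two regular rays
   x, x' with the same label have the same follower set at every source vertex s(x_i).
   A path leaving s(x_i), spliced onto the left half of x, gives a point left-asymptotic to x;
   its label is left-asymptotic to L(x) = L(x'), so regularity of x' lifts it to a point
   left-asymptotic to x'.  Once the lift meets x', right-resolvingness keeps it on x' up to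
   time i - 1, hence the spliced path also leaves s(x'_i). *)

lemma edge_shiftD:
  assumes "x \<in> edge_shift E s t"
  shows "x i \<in> E" and "s (x (i + 1)) = t (x i)"
  using assms unfolding edge_shift_def by auto

lemma right_resolvingD:
  assumes "right_resolving E s lab" and "e \<in> E" and "e' \<in> E"
    and "s e = s e'" and "lab e = lab e'"
  shows "e = e'"
  using assms unfolding right_resolving_def by blast

lemma right_resolving_paths_agree:
  assumes rr: "right_resolving E s lab"
    and x: "x \<in> edge_shift E s t" and y: "y \<in> edge_shift E s t"
    and start: "x N = y N"
    and labels: "\<And>j. N \<le> j \<Longrightarrow> j \<le> M \<Longrightarrow> lab (x j) = lab (y j)"
    and "N \<le> j" and "j \<le> M"
  shows "x j = y j"
  using \<open>N \<le> j\<close> \<open>j \<le> M\<close>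
proof (induction j rule: int_ge_induct)
  case base
  show ?case using start .
next
  case (step i)
  then have "s (x (i + 1)) = s (y (i + 1))"
    using edge_shiftD(2)[OF x] edge_shiftD(2)[OF y] by simp
  with step show ?case
    using right_resolvingD[OF rr] edge_shiftD(1)[OF x] edge_shiftD(1)[OF y] labels by simp
qed

lemma edge_shift_follower:
  assumes "x \<in> edge_shift E s t"
  shows "(\<lambda>n. lab (x (i + int n))) \<in> follower_set E s t lab (s (x i))"
proof -
  have "\<forall>n. x (i + int n) \<in> E \<and> t (x (i + int n)) = s (x (i + int (Suc n)))"
    using edge_shiftD[OF assms] by (metis add.assoc of_nat_Suc add.commute)
  then show ?thesis unfolding follower_set_def by force
qed

definition splice :: "(int \<Rightarrow> 'e) \<Rightarrow> int \<Rightarrow> (nat \<Rightarrow> 'e) \<Rightarrow> int \<Rightarrow> 'e" where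
  "splice x i p j = (if j < i then x j else p (nat (j - i)))"

lemma splice_in_edge_shift:
  assumes x: "x \<in> edge_shift E s t"
    and p: "\<forall>n. p n \<in> E \<and> t (p n) = s (p (Suc n))" and p0: "s (p 0) = s (x i)"
  shows "splice x i p \<in> edge_shift E s t"
  unfolding edge_shift_def
proof (intro CollectI allI conjI)
  fix j
  show "splice x i p j \<in> E" using edge_shiftD(1)[OF x] p by (simp add: splice_def)
  consider "j + 1 < i" | "j + 1 = i" | "i \<le> j" by linarith
  then show "t (splice x i p j) = s (splice x i p (j + 1))"
  proof cases
    case 3
    then have "nat (j + 1 - i) = Suc (nat (j - i))" by simp
    with 3 p show ?thesis by (simp add: splice_def)
  qed (use edge_shiftD(2)[OF x] p0 in \<open>auto simp: splice_def\<close>)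
qed

lemma follower_set_subset_of_regular_ray:
  assumes rr: "right_resolving E s lab"
    and x: "x \<in> edge_shift E s t" and x': "x' \<in> regular_rays E s t lab"
    and same_label: "lab_map lab x = lab_map lab x'"
  shows "follower_set E s t lab (s (x i)) \<subseteq> follower_set E s t lab (s (x' i))"
proof
  fix w assume "w \<in> follower_set E s t lab (s (x i))"
  then obtain p where w: "w = (\<lambda>n. lab (p n))" and p: "\<forall>n. p n \<in> E \<and> t (p n) = s (p (Suc n))"
    and p0: "s (p 0) = s (x i)"
    unfolding follower_set_def by blast
  have x'_shift: "x' \<in> edge_shift E s t"
    and regular: "lab_map lab ` left_asym (edge_shift E s t) x'
      = left_asym (lab_map lab ` edge_shift E s t) (lab_map lab x')"
    using x' unfolding regular_rays_def by auto
  have lab_x: "lab (x j) = lab (x' j)" for j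
    using same_label unfolding lab_map_def by meson
  define z where "z = splice x i p"
  have z: "z \<in> edge_shift E s t"
    unfolding z_def using splice_in_edge_shift[OF x p p0] .
  have "\<forall>k\<le>i - 1. lab_map lab z k = lab_map lab x' k"
    using lab_x by (simp add: z_def splice_def lab_map_def)
  with z have "lab_map lab z \<in> left_asym (lab_map lab ` edge_shift E s t) (lab_map lab x')"
    unfolding left_asym_def by blast
  then have "lab_map lab z \<in> lab_map lab ` left_asym (edge_shift E s t) x'"
    using regular by simp
  then obtain z' N where z': "z' \<in> edge_shift E s t" and z'_N: "\<forall>k\<le>N. z' k = x' k"
    and lab_z': "lab_map lab z' = lab_map lab z"
    unfolding left_asym_def by auto
  have lab_z'_z: "lab (z' j) = lab (z j)" for j
    using lab_z' unfolding lab_map_def by meson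
  have "z' (i - 1) = x' (i - 1)"
  proof (rule right_resolving_paths_agree[OF rr z' x'_shift, of "min N (i - 1)" "i - 1"])
    show "z' (min N (i - 1)) = x' (min N (i - 1))" using z'_N by simp
  qed (auto simp: lab_z'_z lab_x z_def splice_def)
  then have "s (z' i) = s (x' i)"
    using edge_shiftD(2)[OF z', of "i - 1"] edge_shiftD(2)[OF x'_shift, of "i - 1"] by simp
  moreover have "w = (\<lambda>n. lab (z' (i + int n)))"
    unfolding w using lab_z'_z by (simp add: z_def splice_def)
  ultimately show "w \<in> follower_set E s t lab (s (x' i))"
    using edge_shift_follower[OF z'] by metis
qed

theorem lemma2p8:
  fixes V :: "'v set" and E :: "'e set" and s t :: "'e \<Rightarrow> 'v" and lab :: "'e \<Rightarrow> 'a"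
  assumes "labeled_graph V E s t lab"
    and "right_resolving E s lab"
    and "follower_separated V E s t lab"
  shows "inj_on (lab_map lab) (regular_rays E s t lab)"
proof (rule inj_onI)
  fix x x' assume x: "x \<in> regular_rays E s t lab" and x': "x' \<in> regular_rays E s t lab"
    and same_label: "lab_map lab x = lab_map lab x'"
  have x_shift: "x \<in> edge_shift E s t" and x'_shift: "x' \<in> edge_shift E s t"
    using x x' unfolding regular_rays_def by auto
  show "x = x'"
  proof
    fix i
    have "follower_set E s t lab (s (x i)) = follower_set E s t lab (s (x' i))"
      using follower_set_subset_of_regular_ray[OF assms(2) x_shift x' same_label]
        follower_set_subset_of_regular_ray[OF assms(2) x'_shift x same_label[symmetric]]
      by blast
    moreover have "s (x i) \<in> V" "s (x' i) \<in> V"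
      using edge_shiftD(1)[OF x_shift] edge_shiftD(1)[OF x'_shift] assms(1)
      unfolding labeled_graph_def by auto
    ultimately have "s (x i) = s (x' i)"
      using assms(3) unfolding follower_separated_def by blast
    moreover have "lab (x i) = lab (x' i)"
      using same_label unfolding lab_map_def by meson
    ultimately show "x i = x' i"
      using right_resolvingD[OF assms(2)] edge_shiftD(1)[OF x_shift] edge_shiftD(1)[OF x'_shift]
      by blast
  qed
qed

end
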